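(* Every strongly homogeneous separable metrizable zero-dimensional space is strongly discrete homogeneous. In particular, the Cantor set $\mathbb C$, the rationals $\mathbb Q$, the irrationals $\mathbb P$, $\mathbb C\times\mathbb Q$ and $\mathbb C\times\mathbb P$ are strongly discrete homogeneous.
   Context: A Hausdorff space is strongly homogeneous if all of its nonempty clopen subspaces are homeomorphic to each other. A subset $D$ of $X$ is discrete if each point of $X$ has a neighbourhood containing at most one point of $D$. A Hausdorff space $X$ is strongly discrete homogeneous (sDH) if for any two discrete subsets $A,B$ of $X$ and any bijection $f\colon A\to B$, $f$ extends to a homeomorphism of $X$ onto itself. *)

theory Defs
  imports "HOL-Analysis.Analysis"
begin

definition strongly_homogeneous :: "'a topology \<Rightarrow> bool" where
  "strongly_homogeneous X \<longleftrightarrow> Hausdorff_space X \<and>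
     (\<forall>U V. closedin X U \<and> openin X U \<and> U \<noteq> {} \<and> closedin X V \<and> openin X V \<and> V \<noteq> {} \<longrightarrow>
        subtopology X U homeomorphic_space subtopology X V)"

definition discrete_subset :: "'a topology \<Rightarrow> 'a set \<Rightarrow> bool" where
  "discrete_subset X D \<longleftrightarrow> D \<subseteq> topspace X \<and>
     (\<forall>x\<in>topspace X. \<exists>U. openin X U \<and> x \<in> U \<and>
        (\<forall>a\<in>U \<inter> D. \<forall>b\<in>U \<inter> D. a = b))"

definition strongly_discrete_homogeneous :: "'a topology \<Rightarrow> bool" where
  "strongly_discrete_homogeneous X \<longleftrightarrow> Hausdorff_space X \<and>
     (\<forall>A B f. discrete_subset X A \<and> discrete_subset X B \<and> bij_betw f A B \<longrightarrow>
        (\<exists>h. homeomorphic_map X X h \<and> (\<forall>a\<in>A. h a = f a)))"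

end

theory Submission
  imports Defs
begin

text \<open>Zero-dimensionality and the Lindelof property split X into countably many disjoint
  clopen pieces, each meeting the discrete set A in at most one point; the pieces missing A,
  together with a clopen set carved out of one of the other pieces, form a nonempty remainder.
  Doing the same for B, strong homogeneity makes corresponding pieces homeomorphic, and the
  homeomorphisms paste to a homeomorphism of X. To send a to f a inside its piece, note that a
  strongly homogeneous, first countable, zero-dimensional space is homogeneous: take strictly
  decreasing clopen neighbourhood bases (U n) at x and (V n) at y; the shells U n - U (n+1) and
  V n - V (n+1) are nonempty and clopen, hence homeomorphic, and these homeomorphisms together
  with x to y form a homeomorphism of X. An isolated point forces X to be a singleton.\<close>

section \<open>Clopen partitions of zero-dimensional Lindelof spaces\<close>

abbreviation clopenin :: "'a topology \<Rightarrow> 'a set \<Rightarrow> bool" where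
  "clopenin X U \<equiv> closedin X U \<and> openin X U"

lemma (in Metric_space) separable_imp_second_countable:
  assumes "separable_space mtopology"
  shows "second_countable mtopology"
proof -
  obtain C where C: "countable C" "C \<subseteq> M" "mtopology closure_of C = M"
    using assms unfolding separable_space_def by auto
  define \<B> where "\<B> = (\<lambda>(c, n). mball c (1 / Suc n)) ` (C \<times> UNIV)"
  have "neighbourhood_base_of (\<lambda>V. V \<in> \<B>) mtopology"
    unfolding neighbourhood_base_of
  proof (intro allI impI)
    fix W x assume "openin mtopology W \<and> x \<in> W"
    then obtain r where r: "r > 0" "mball x r \<subseteq> W" "x \<in> M"
      by (metis openin_mtopology openin_subset subsetD topspace_mtopology)
    obtain n where n: "1 / Suc n < r / 2"
      using r(1) by (metis half_gt_zero_iff nat_approx_posE)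
    have "x \<in> mtopology closure_of C" using C(3) r(3) by simp
    then obtain c where c: "c \<in> C" "c \<in> mball x (1 / Suc n)"
      unfolding in_closure_of using r(3) by (meson centre_in_mball_iff openin_mball divide_pos_pos
          of_nat_0_less_iff zero_less_Suc zero_less_one)
    have "mball c (1 / Suc n) \<subseteq> mball x r"
      by (rule mball_subset) (use c n r(3) commute in auto)
    moreover have "mball c (1 / Suc n) \<in> \<B>" using c(1) unfolding \<B>_def by blast
    moreover have "x \<in> mball c (1 / Suc n)" using c(2) r(3) commute by auto
    ultimately show "\<exists>U V. openin mtopology U \<and> V \<in> \<B> \<and> x \<in> U \<and> U \<subseteq> V \<and> V \<subseteq> W"
      using r(2) by blast
  qed
  moreover have "countable \<B>" unfolding \<B>_def using C(1) by auto
  ultimately show ?thesis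
    unfolding second_countable_neighbourhood_base by (intro exI[of _ \<B>] conjI)
qed

lemma separable_metrizable_imp_Lindelof_space:
  assumes "separable_space X" "metrizable_space X"
  shows "Lindelof_space X"
  using assms Metric_space.separable_imp_second_countable second_countable_imp_Lindelof_space
  unfolding metrizable_space_def by metis

lemma dimension_le_0_clopen_subnbhd:
  assumes "X dim_le 0" "openin X W" "x \<in> W"
  obtains V where "clopenin X V" "x \<in> V" "V \<subseteq> W"
  using assms unfolding dimension_le_0_neighbourhood_base_of_clopen neighbourhood_base_of
  by blast

lemma Lindelof_clopen_cover_disjoint_refinement:
  assumes L: "Lindelof_space X" and \<U>: "\<And>C. C \<in> \<U> \<Longrightarrow> clopenin X C" "topspace X \<subseteq> \<Union>\<U>"
  obtains c :: "nat \<Rightarrow> 'a set" where "\<And>n. clopenin X (c n)" "disjoint_family c"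
    "topspace X \<subseteq> (\<Union>n. c n)" "\<And>n. c n \<noteq> {} \<Longrightarrow> \<exists>C\<in>\<U>. c n \<subseteq> C"
proof -
  obtain \<V> where \<V>: "countable \<V>" "\<V> \<subseteq> \<U>" "topspace X \<subseteq> \<Union>\<V>"
    using L[unfolded Lindelof_space_alt, rule_format, of \<U>] \<U> by blast
  show thesis
  proof (cases "\<V> = {}")
    case True
    show thesis by (rule that[of "\<lambda>n. {}"]) (use True \<V> in \<open>auto simp: disjoint_family_on_def\<close>)
  next
    case False
    define e where "e = from_nat_into \<V>"
    have e: "e n \<in> \<V>" for n using False e_def from_nat_into by metis
    have "range e = \<V>" using \<V>(1) False unfolding e_def by (simp add: range_from_nat_into)
    show thesis
    proof (rule that[of "disjointed e"])
      fix n
      have e_clopen: "clopenin X (e i)" for i using e \<V>(2) \<U>(1) by blast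
      have "closedin X (\<Union>i\<in>{0..<n}. e i)" using e_clopen by (intro closedin_Union) auto
      moreover have "openin X (\<Union>i\<in>{0..<n}. e i)" using e_clopen by (intro openin_Union) auto
      ultimately show "clopenin X (disjointed e n)"
        using e_clopen unfolding disjointed_def by (simp add: closedin_diff openin_diff)
      show "\<exists>C\<in>\<U>. disjointed e n \<subseteq> C"
        using e[of n] \<V>(2) disjointed_subset[of e n] by blast
    next
      show "disjoint_family (disjointed e)" by (rule disjoint_family_disjointed)
      show "topspace X \<subseteq> (\<Union>n. disjointed e n)"
        using \<open>range e = \<V>\<close> \<V>(3) by (simp only: UN_disjointed_eq)
    qed
  qed
qed

lemma closedin_Union_disjoint_open_cover:
  assumes "\<And>i. i \<in> I \<Longrightarrow> openin X (c i)" "disjoint_family_on c I"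
    "topspace X \<subseteq> (\<Union>i\<in>I. c i)" "N \<subseteq> I"
  shows "closedin X (\<Union>i\<in>N. c i)"
proof -
  have "(\<Union>i\<in>N. c i) = topspace X - (\<Union>i\<in>I - N. c i)"
  proof (intro equalityI subsetI)
    fix z assume "z \<in> (\<Union>i\<in>N. c i)"
    then obtain i where i: "i \<in> N" "z \<in> c i" by blast
    then have "z \<notin> c j" if "j \<in> I - N" for j
      using disjoint_family_onD[OF assms(2), of i j] assms(4) that by auto
    moreover have "z \<in> topspace X" using i assms(1,4) openin_subset by blast
    ultimately show "z \<in> topspace X - (\<Union>i\<in>I - N. c i)" by blast
  next
    fix z assume "z \<in> topspace X - (\<Union>i\<in>I - N. c i)"
    then show "z \<in> (\<Union>i\<in>N. c i)" using assms(3) by blast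
  qed
  moreover have "openin X (\<Union>i\<in>I - N. c i)"
    using assms(1) by (intro openin_Union) auto
  ultimately show ?thesis
    by (simp add: closedin_diff)
qed

lemma discrete_subsetD:
  assumes "discrete_subset X D" "x \<in> topspace X"
  obtains U where "openin X U" "x \<in> U" "\<And>a b. a \<in> U \<inter> D \<Longrightarrow> b \<in> U \<inter> D \<Longrightarrow> a = b"
  using assms unfolding discrete_subset_def by metis

lemma discrete_subset_countable_clopen_partition:
  assumes "Lindelof_space X" "X dim_le 0" "discrete_subset X A"
  obtains c :: "nat \<Rightarrow> 'a set" where "\<And>n. clopenin X (c n)" "disjoint_family c"
    "topspace X \<subseteq> (\<Union>n. c n)" "\<And>n a b. a \<in> c n \<inter> A \<Longrightarrow> b \<in> c n \<inter> A \<Longrightarrow> a = b"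
proof -
  define \<U> where "\<U> = {C. clopenin X C \<and> (\<forall>a\<in>C \<inter> A. \<forall>b\<in>C \<inter> A. a = b)}"
  have "\<exists>C\<in>\<U>. x \<in> C" if x: "x \<in> topspace X" for x
  proof -
    obtain W where W: "openin X W" "x \<in> W" "\<And>a b. a \<in> W \<inter> A \<Longrightarrow> b \<in> W \<inter> A \<Longrightarrow> a = b"
      by (rule discrete_subsetD[OF assms(3) x]) (rule that)
    obtain C where C: "clopenin X C" "x \<in> C" "C \<subseteq> W"
      by (rule dimension_le_0_clopen_subnbhd[OF assms(2) W(1,2)]) (rule that)
    have "a = b" if "a \<in> C \<inter> A" "b \<in> C \<inter> A" for a b
      by (rule W(3)) (use that C(3) in auto)
    then have "C \<in> \<U>" unfolding \<U>_def using C(1) by auto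
    then show ?thesis using C(2) by auto
  qed
  then have \<U>_cover: "topspace X \<subseteq> \<Union>\<U>" by blast
  have \<U>_clopen: "clopenin X C" if "C \<in> \<U>" for C using that unfolding \<U>_def by blast
  obtain c :: "nat \<Rightarrow> 'a set"
    where c: "\<And>n. clopenin X (c n)" "disjoint_family c"
      "topspace X \<subseteq> (\<Union>n. c n)" "\<And>n. c n \<noteq> {} \<Longrightarrow> \<exists>C\<in>\<U>. c n \<subseteq> C"
    using Lindelof_clopen_cover_disjoint_refinement[OF assms(1) \<U>_clopen \<U>_cover] by blast
  have "a = b" if ab: "a \<in> c n \<inter> A" "b \<in> c n \<inter> A" for n a b
  proof -
    obtain C where "C \<in> \<U>" "c n \<subseteq> C" using c(4) ab by auto
    then have "\<forall>a\<in>C \<inter> A. \<forall>b\<in>C \<inter> A. a = b" unfolding \<U>_def by simp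
    then show ?thesis using ab \<open>c n \<subseteq> C\<close> by auto
  qed
  then show thesis by (rule that[OF c(1-3)])
qed

lemma discrete_subset_clopen_separation:
  assumes "Lindelof_space X" "X dim_le 0" "discrete_subset X A"
  obtains U R where "\<And>a. a \<in> A \<Longrightarrow> clopenin X (U a)" "\<And>a. a \<in> A \<Longrightarrow> a \<in> U a"
    "disjoint_family_on U A" "clopenin X R" "\<And>a. a \<in> A \<Longrightarrow> R \<inter> U a = {}"
    "topspace X \<subseteq> R \<union> (\<Union>a\<in>A. U a)"
proof -
  obtain c :: "nat \<Rightarrow> 'a set"
    where c: "\<And>k. clopenin X (c k)" "disjoint_family c" "topspace X \<subseteq> (\<Union>k. c k)"
      "\<And>k a b. a \<in> c k \<inter> A \<Longrightarrow> b \<in> c k \<inter> A \<Longrightarrow> a = b"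
    using discrete_subset_countable_clopen_partition[OF assms] by metis
  have "A \<subseteq> topspace X" using assms(3) unfolding discrete_subset_def by simp
  then have "\<forall>a\<in>A. \<exists>k. a \<in> c k" using c(3) by blast
  then obtain n where n: "\<And>a. a \<in> A \<Longrightarrow> a \<in> c (n a)" by metis
  have n_eq: "n a = k" if "a \<in> A" "a \<in> c k" for a k
    using disjoint_family_onD[OF c(2), of "n a" k] n that by auto
  define R where "R = (\<Union>k \<in> {k. c k \<inter> A = {}}. c k)"
  show thesis
  proof (rule that[of "\<lambda>a. c (n a)" R])
    show "clopenin X (c (n a))" "a \<in> c (n a)" if "a \<in> A" for a
      using c(1) n that by blast+
    show "disjoint_family_on (\<lambda>a. c (n a)) A"
      unfolding disjoint_family_on_def
    proof (intro ballI impI)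
      fix a b assume ab: "a \<in> A" "b \<in> A" "a \<noteq> b"
      then have "n a \<noteq> n b" using c(4)[where k = "n a" and a = a and b = b] n by auto
      then show "c (n a) \<inter> c (n b) = {}" using disjoint_family_onD[OF c(2)] by blast
    qed
    show "clopenin X R"
      using c(1-3) closedin_Union_disjoint_open_cover[of UNIV X c] unfolding R_def by auto
    show "R \<inter> c (n a) = {}" if a: "a \<in> A" for a
    proof -
      have "c k \<inter> c (n a) = {}" if "c k \<inter> A = {}" for k
        using disjoint_family_onD[OF c(2), of k "n a"] n[OF a] a that by auto
      then show ?thesis unfolding R_def by auto
    qed
    show "topspace X \<subseteq> R \<union> (\<Union>a\<in>A. c (n a))"
    proof
      fix z assume "z \<in> topspace X"
      then obtain k where k: "z \<in> c k" using c(3) by blast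
      show "z \<in> R \<union> (\<Union>a\<in>A. c (n a))"
      proof (cases "c k \<inter> A = {}")
        case True
        then show ?thesis using k unfolding R_def by auto
      next
        case False
        then obtain a where "a \<in> A" "a \<in> c k" by blast
        then show ?thesis using k n_eq by auto
      qed
    qed
  qed
qed

lemma discrete_subset_clopen_partition:
  assumes L: "Lindelof_space X" and d0: "X dim_le 0" and T1: "t1_space X"
    and noiso: "\<And>z. z \<in> topspace X \<Longrightarrow> \<not> openin X {z}"
    and A: "discrete_subset X A" "A \<noteq> {}"
  obtains P :: "'a option \<Rightarrow> 'a set"
  where "\<And>i. i \<in> insert None (Some ` A) \<Longrightarrow> clopenin X (P i)"
    "disjoint_family_on P (insert None (Some ` A))"
    "topspace X \<subseteq> (\<Union>i \<in> insert None (Some ` A). P i)"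
    "\<And>a. a \<in> A \<Longrightarrow> a \<in> P (Some a)" "P None \<noteq> {}"
proof -
  obtain U R where U: "\<And>a. a \<in> A \<Longrightarrow> clopenin X (U a)" "\<And>a. a \<in> A \<Longrightarrow> a \<in> U a"
      "disjoint_family_on U A"
    and R: "clopenin X R" "\<And>a. a \<in> A \<Longrightarrow> R \<inter> U a = {}" "topspace X \<subseteq> R \<union> (\<Union>a\<in>A. U a)"
    using discrete_subset_clopen_separation[OF L d0 A(1)] by metis
  obtain a0 where a0: "a0 \<in> A" using A(2) by blast
  have a0_top: "a0 \<in> topspace X" using a0 A(1) unfolding discrete_subset_def by blast
  \<comment> \<open>Strong homogeneity only matches nonempty clopen sets, so the remainder piece must be
    nonempty: carve a clopen set out of the piece of a0.\<close>
  have "U a0 \<noteq> {a0}" using noiso[OF a0_top] U(1)[OF a0] by metis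
  then obtain q where q: "q \<in> U a0" "q \<noteq> a0" using U(2)[OF a0] by blast
  have "openin X (U a0 - {a0})"
    using U(1)[OF a0] closedin_t1_singleton[OF T1 a0_top] by (simp add: openin_diff)
  then obtain K where K: "clopenin X K" "q \<in> K" "K \<subseteq> U a0 - {a0}"
    using dimension_le_0_clopen_subnbhd[OF d0] q by blast
  have A_not_K: "a \<notin> K" if a: "a \<in> A" for a
  proof
    assume "a \<in> K"
    then have "a \<in> U a0" "a \<noteq> a0" using K(3) by auto
    then show False using disjoint_family_onD[OF U(3) a a0] U(2)[OF a] by blast
  qed
  define P where "P i = (case i of None \<Rightarrow> R \<union> K | Some a \<Rightarrow> U a - K)" for i
  show thesis
  proof (rule that[of P])
    show "clopenin X (P i)" if "i \<in> insert None (Some ` A)" for i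
      using that R(1) K(1) U(1) unfolding P_def by (cases i) (auto intro: closedin_diff openin_diff)
    have "U a \<inter> U b = {}" if "a \<in> A" "b \<in> A" "a \<noteq> b" for a b
      using disjoint_family_onD[OF U(3)] that by blast
    then show "disjoint_family_on P (insert None (Some ` A))"
      unfolding disjoint_family_on_def P_def using R(2) by (auto split: option.splits)
    show "topspace X \<subseteq> (\<Union>i \<in> insert None (Some ` A). P i)"
      using R(3) unfolding P_def by force
    show "a \<in> P (Some a)" if "a \<in> A" for a
      using U(2) A_not_K that unfolding P_def by auto
    show "P None \<noteq> {}" using K(2) unfolding P_def by auto
  qed
qed

section \<open>Pasting homeomorphisms\<close>

lemma homeomorphic_maps_subtopologyD:
  assumes "homeomorphic_maps (subtopology X S) (subtopology Y T) f g"
    "S \<subseteq> topspace X" "T \<subseteq> topspace Y"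
  shows "continuous_map (subtopology X S) Y f" "f ` S \<subseteq> T" "\<And>z. z \<in> S \<Longrightarrow> g (f z) = z"
proof -
  have f: "continuous_map (subtopology X S) (subtopology Y T) f"
    using assms(1) unfolding homeomorphic_maps_def by blast
  then show "continuous_map (subtopology X S) Y f"
    using continuous_map_in_subtopology by blast
  show "f ` S \<subseteq> T"
    using continuous_map_image_subset_topspace[OF f] assms(2,3)
    by (simp add: Int_absorb1 inf.absorb2)
  show "g (f z) = z" if "z \<in> S" for z
    using assms(1,2) that unfolding homeomorphic_maps_def by (auto simp: topspace_subtopology_subset)
qed

lemma homeomorphic_map_paste:
  assumes D: "\<And>i. i \<in> I \<Longrightarrow> openin X (D i)" "disjoint_family_on D I" "topspace X \<subseteq> (\<Union>i\<in>I. D i)"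
    and E: "\<And>i. i \<in> I \<Longrightarrow> openin Y (E i)" "disjoint_family_on E I" "topspace Y \<subseteq> (\<Union>i\<in>I. E i)"
    and hm: "\<And>i. i \<in> I \<Longrightarrow> homeomorphic_map (subtopology X (D i)) (subtopology Y (E i)) (f i)"
  obtains h where "homeomorphic_map X Y h" "\<And>i z. i \<in> I \<Longrightarrow> z \<in> D i \<Longrightarrow> h z = f i z"
proof -
  have "\<forall>i\<in>I. \<exists>g. homeomorphic_maps (subtopology X (D i)) (subtopology Y (E i)) (f i) g"
    using hm homeomorphic_map_maps by blast
  then obtain g where
    g: "\<And>i. i \<in> I \<Longrightarrow> homeomorphic_maps (subtopology X (D i)) (subtopology Y (E i)) (f i) (g i)"
    by metis
  have D_top: "D i \<subseteq> topspace X" and E_top: "E i \<subseteq> topspace Y" if "i \<in> I" for i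
    using D(1) E(1) that openin_subset by blast+
  note f = homeomorphic_maps_subtopologyD[OF g D_top E_top]
  note g' = homeomorphic_maps_subtopologyD[OF homeomorphic_maps_sym[THEN iffD1, OF g] E_top D_top]
  have D_unique: "i = j" if "i \<in> I" "j \<in> I" "z \<in> D i" "z \<in> D j" for i j z
    using disjoint_family_onD[OF D(2), of i j] that by blast
  have E_unique: "i = j" if "i \<in> I" "j \<in> I" "z \<in> E i" "z \<in> E j" for i j z
    using disjoint_family_onD[OF E(2), of i j] that by blast
  obtain h where h: "continuous_map X Y h" "\<And>z i. i \<in> I \<Longrightarrow> z \<in> topspace X \<inter> D i \<Longrightarrow> h z = f i z"
    using pasting_lemma_exists[OF D(3) D(1) f(1)] D_unique by (metis IntD1 IntD2)
  obtain k where k: "continuous_map Y X k" "\<And>z i. i \<in> I \<Longrightarrow> z \<in> topspace Y \<inter> E i \<Longrightarrow> k z = g i z"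
    using pasting_lemma_exists[OF E(3) E(1) g'(1)] E_unique by (metis IntD1 IntD2)
  have "k (h z) = z" if z: "z \<in> topspace X" for z
  proof -
    obtain i where i: "i \<in> I" "z \<in> D i" using D(3) z by blast
    then have "f i z \<in> E i" using f(2) by blast
    then have "k (f i z) = g i (f i z)" using k(2) i(1) E_top by blast
    moreover have "h z = f i z" using h(2) i z by blast
    ultimately show ?thesis using f(3) i by simp
  qed
  moreover have "h (k z) = z" if z: "z \<in> topspace Y" for z
  proof -
    obtain i where i: "i \<in> I" "z \<in> E i" using E(3) z by blast
    then have "g i z \<in> D i" using g'(2) by blast
    then have "h (g i z) = f i (g i z)" using h(2) i(1) D_top by blast
    moreover have "k z = g i z" using k(2) i z by blast
    ultimately show ?thesis using g'(3) i by simp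
  qed
  ultimately have "homeomorphic_maps X Y h k"
    unfolding homeomorphic_maps_def using h(1) k(1) by blast
  then show thesis
    using that h(2) D_top homeomorphic_map_maps by blast
qed

lemma strongly_homogeneous_imp_Hausdorff_space:
  "strongly_homogeneous X \<Longrightarrow> Hausdorff_space X"
  unfolding strongly_homogeneous_def by blast

lemma strongly_homogeneousD:
  assumes "strongly_homogeneous X" "clopenin X U" "U \<noteq> {}" "clopenin X V" "V \<noteq> {}"
  shows "subtopology X U homeomorphic_space subtopology X V"
  using assms unfolding strongly_homogeneous_def by blast

lemma strongly_homogeneous_subtopology:
  assumes SH: "strongly_homogeneous X" and U: "clopenin X U"
  shows "strongly_homogeneous (subtopology X U)"
  unfolding strongly_homogeneous_def
proof (intro conjI allI impI)
  show "Hausdorff_space (subtopology X U)"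
    using SH Hausdorff_space_subtopology strongly_homogeneous_imp_Hausdorff_space by blast
  fix V W
  assume VW: "closedin (subtopology X U) V \<and> openin (subtopology X U) V \<and> V \<noteq> {} \<and>
    closedin (subtopology X U) W \<and> openin (subtopology X U) W \<and> W \<noteq> {}"
  then have "clopenin X V" "clopenin X W"
    using U closedin_trans_full openin_trans_full by metis+
  moreover have "V \<subseteq> U" "W \<subseteq> U"
    using VW closedin_subset by fastforce+
  ultimately show "subtopology (subtopology X U) V homeomorphic_space subtopology (subtopology X U) W"
    using strongly_homogeneousD[OF SH] VW by (simp add: subtopology_subtopology inf_absorb2)
qed

lemma strongly_homogeneous_isolated_point:
  assumes SH: "strongly_homogeneous X" and x: "x \<in> topspace X" "openin X {x}"
  shows "topspace X = {x}"
proof -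
  have "closedin X {x}"
    using closedin_t1_singleton[OF Hausdorff_imp_t1_space[OF strongly_homogeneous_imp_Hausdorff_space[OF SH]] x(1)] .
  have "subtopology X {x} homeomorphic_space subtopology X (topspace X)"
    by (rule strongly_homogeneousD[OF SH]) (use x \<open>closedin X {x}\<close> in auto)
  then obtain g where "homeomorphic_map (subtopology X {x}) X g"
    by (auto simp: homeomorphic_space)
  then have "g ` {x} = topspace X"
    using x(1) homeomorphic_imp_surjective_map[of "subtopology X {x}" X g]
    by (simp add: topspace_subtopology_subset)
  then show ?thesis using x(1) by (metis image_empty image_insert singletonD)
qed

section \<open>Homogeneity from clopen shells\<close>

definition clopen_nbhd_chain :: "'a topology \<Rightarrow> 'a \<Rightarrow> (nat \<Rightarrow> 'a set) \<Rightarrow> bool" where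
  "clopen_nbhd_chain X x U \<longleftrightarrow> U 0 = topspace X \<and> decseq U \<and> (\<forall>n. clopenin X (U n) \<and> x \<in> U n) \<and>
     (\<forall>W. openin X W \<and> x \<in> W \<longrightarrow> (\<exists>n. U n \<subseteq> W))"

definition shell :: "(nat \<Rightarrow> 'a set) \<Rightarrow> nat \<Rightarrow> 'a set" where
  "shell U n = U n - U (Suc n)"

definition shell_index :: "(nat \<Rightarrow> 'a set) \<Rightarrow> 'a \<Rightarrow> nat" where
  "shell_index U z = (LEAST n. z \<notin> U (Suc n))"

definition shellwise :: "'a \<Rightarrow> 'b \<Rightarrow> (nat \<Rightarrow> 'a set) \<Rightarrow> (nat \<Rightarrow> 'a \<Rightarrow> 'b) \<Rightarrow> 'a \<Rightarrow> 'b" where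
  "shellwise x y U \<phi> z = (if z = x then y else \<phi> (shell_index U z) z)"

lemma clopen_nbhd_chainD:
  assumes "clopen_nbhd_chain X x U"
  shows "U 0 = topspace X" "decseq U" "clopenin X (U n)" "x \<in> U n"
  using assms unfolding clopen_nbhd_chain_def by auto

lemma clopen_nbhd_chain_base:
  assumes "clopen_nbhd_chain X x U" "openin X W" "x \<in> W"
  obtains n where "U n \<subseteq> W"
  using assms unfolding clopen_nbhd_chain_def by auto

lemma clopen_shell:
  assumes "clopen_nbhd_chain X x U"
  shows "clopenin X (shell U n)"
  using clopen_nbhd_chainD[OF assms] unfolding shell_def by (simp add: closedin_diff openin_diff)

lemma shell_index_eqI:
  assumes "decseq U" "z \<in> shell U m"
  shows "shell_index U z = m"
  unfolding shell_index_def
proof (rule Least_equality)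
  show "z \<notin> U (Suc m)" using assms(2) unfolding shell_def by blast
  show "m \<le> n" if "z \<notin> U (Suc n)" for n
  proof (rule ccontr)
    assume "\<not> m \<le> n"
    then have "U m \<subseteq> U (Suc n)" using decseqD[OF assms(1), of "Suc n" m] by simp
    then show False using that assms(2) unfolding shell_def by blast
  qed
qed

lemma in_shell_shell_index:
  assumes U: "clopen_nbhd_chain X x U" and T1: "t1_space X" and z: "z \<in> topspace X" "z \<noteq> x"
  shows "z \<in> shell U (shell_index U z)"
proof -
  have "openin X (topspace X - {z})"
    using closedin_t1_singleton[OF T1 z(1)] by (simp add: openin_diff)
  moreover have "x \<in> topspace X - {z}" using clopen_nbhd_chainD(1)[OF U] clopen_nbhd_chainD(4)[OF U, of 0] z(2) by simp
  ultimately obtain n where "U n \<subseteq> topspace X - {z}"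
    using clopen_nbhd_chain_base[OF U] by metis
  then have "z \<notin> U n" by blast
  moreover have "z \<in> U 0" using clopen_nbhd_chainD(1)[OF U] z(1) by simp
  ultimately obtain k where "z \<in> U k" "z \<notin> U (Suc k)"
    using ex_least_nat_less[of "\<lambda>i. z \<notin> U i" n] by blast
  then have "z \<in> shell U k" unfolding shell_def by blast
  then show ?thesis
    using shell_index_eqI[OF clopen_nbhd_chainD(2)[OF U]] by simp
qed

lemma shellwise_on_shell:
  assumes U: "clopen_nbhd_chain X x U" and z: "z \<in> shell U k"
  shows "shellwise x y U \<phi> z = \<phi> k z"
proof -
  have "z \<noteq> x" using clopen_nbhd_chainD(4)[OF U, of "Suc k"] z unfolding shell_def by blast
  then show ?thesis
    using shell_index_eqI[OF clopen_nbhd_chainD(2)[OF U] z] unfolding shellwise_def by simp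
qed

lemma shellwise_in_chain:
  assumes U: "clopen_nbhd_chain X x U" and V: "clopen_nbhd_chain Y y V" and T1: "t1_space X"
    and img: "\<And>k. \<phi> k ` shell U k \<subseteq> shell V k" and z: "z \<in> U n"
  shows "shellwise x y U \<phi> z \<in> V n"
proof (cases "z = x")
  case True
  then show ?thesis using clopen_nbhd_chainD(4)[OF V] unfolding shellwise_def by simp
next
  case False
  define k where "k = shell_index U z"
  have "z \<in> topspace X" using clopen_nbhd_chainD(3)[OF U, of n] z openin_subset by blast
  then have zk: "z \<in> shell U k" using in_shell_shell_index[OF U T1 _ False] unfolding k_def by blast
  have "n \<le> k"
  proof (rule ccontr)
    assume "\<not> n \<le> k"
    then have "U n \<subseteq> U (Suc k)" using decseqD[OF clopen_nbhd_chainD(2)[OF U], of "Suc k" n] by simp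
    then show False using z zk unfolding shell_def by blast
  qed
  then have "V k \<subseteq> V n" using decseqD[OF clopen_nbhd_chainD(2)[OF V]] by blast
  moreover have "\<phi> k z \<in> V k" using img[of k] zk unfolding shell_def by blast
  ultimately show ?thesis using shellwise_on_shell[OF U zk, where y = y and \<phi> = \<phi>] by auto
qed

lemma continuous_map_shellwise:
  assumes U: "clopen_nbhd_chain X x U" and V: "clopen_nbhd_chain Y y V" and T1: "t1_space X"
    and cont: "\<And>k. continuous_map (subtopology X (shell U k)) Y (\<phi> k)"
    and img: "\<And>k. \<phi> k ` shell U k \<subseteq> shell V k"
  shows "continuous_map X Y (shellwise x y U \<phi>)"
proof -
  let ?h = "shellwise x y U \<phi>"
  have maps: "?h \<in> topspace X \<rightarrow> topspace Y"
    using shellwise_in_chain[OF U V T1 img, of _ 0]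
    by (simp add: clopen_nbhd_chainD(1)[OF U] clopen_nbhd_chainD(1)[OF V])
  have "\<exists>W. openin X W \<and> z \<in> W \<and> (\<forall>w\<in>W. ?h w \<in> G)"
    if z: "z \<in> topspace X" and G: "openin Y G" "?h z \<in> G" for z G
  proof (cases "z = x")
    case True
    then have "y \<in> G" using G(2) by (simp add: shellwise_def)
    then obtain n where "V n \<subseteq> G" using clopen_nbhd_chain_base[OF V G(1)] by metis
    then show ?thesis
      using shellwise_in_chain[OF U V T1 img, of _ n] clopen_nbhd_chainD(3,4)[OF U, of n] True
      by blast
  next
    case False
    define k where "k = shell_index U z"
    have zk: "z \<in> shell U k" using in_shell_shell_index[OF U T1 z False] unfolding k_def .
    have shell_top: "shell U k \<subseteq> topspace X"
      using clopen_shell[OF U, of k] closedin_subset by blast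
    have "openin (subtopology X (shell U k)) (topspace (subtopology X (shell U k)) \<inter> \<phi> k -` G)"
      using cont[of k] G(1) unfolding continuous_map_openin_preimage_eq by blast
    then have "openin X (shell U k \<inter> \<phi> k -` G)"
      using clopen_shell[OF U, of k] shell_top openin_trans_full
      by (metis inf.absorb_iff2 topspace_subtopology)
    moreover have "z \<in> shell U k \<inter> \<phi> k -` G"
      using zk G(2) shellwise_on_shell[OF U zk, where y = y and \<phi> = \<phi>] by simp
    moreover have "\<forall>w \<in> shell U k \<inter> \<phi> k -` G. ?h w \<in> G"
      using shellwise_on_shell[OF U, where y = y and \<phi> = \<phi>] by auto
    ultimately show ?thesis by blast
  qed
  then show ?thesis
    unfolding continuous_map_eq_topcontinuous_at topcontinuous_at_def using maps by blast
qed

lemma shellwise_inverse: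
  assumes U: "clopen_nbhd_chain X x U" and V: "clopen_nbhd_chain Y y V" and T1: "t1_space X"
    and img: "\<And>k. \<phi> k ` shell U k \<subseteq> shell V k"
    and inv: "\<And>k z. z \<in> shell U k \<Longrightarrow> \<psi> k (\<phi> k z) = z"
    and z: "z \<in> topspace X"
  shows "shellwise y x V \<psi> (shellwise x y U \<phi> z) = z"
proof (cases "z = x")
  case True
  then show ?thesis unfolding shellwise_def by simp
next
  case False
  define k where "k = shell_index U z"
  have zk: "z \<in> shell U k" using in_shell_shell_index[OF U T1 z False] unfolding k_def .
  then have "\<phi> k z \<in> shell V k" using img by blast
  then show ?thesis
    using zk inv shellwise_on_shell[OF U zk, where y = y and \<phi> = \<phi>]
      shellwise_on_shell[OF V \<open>\<phi> k z \<in> shell V k\<close>, where y = x and \<phi> = \<psi>]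
    by simp
qed

lemma homeomorphic_map_shellwise:
  assumes U: "clopen_nbhd_chain X x U" and V: "clopen_nbhd_chain Y y V"
    and "t1_space X" "t1_space Y"
    and hm: "\<And>k. homeomorphic_map (subtopology X (shell U k)) (subtopology Y (shell V k)) (\<phi> k)"
  shows "homeomorphic_map X Y (shellwise x y U \<phi>)"
proof -
  have "\<forall>k. \<exists>\<psi>. homeomorphic_maps (subtopology X (shell U k)) (subtopology Y (shell V k)) (\<phi> k) \<psi>"
    using hm homeomorphic_map_maps by blast
  then obtain \<psi> where
    \<psi>: "\<And>k. homeomorphic_maps (subtopology X (shell U k)) (subtopology Y (shell V k)) (\<phi> k) (\<psi> k)"
    by metis
  have U_top: "shell U k \<subseteq> topspace X" and V_top: "shell V k \<subseteq> topspace Y" for k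
    using clopen_shell[OF U] clopen_shell[OF V] closedin_subset by blast+
  note \<phi> = homeomorphic_maps_subtopologyD[OF \<psi> U_top V_top]
  note \<psi>' = homeomorphic_maps_subtopologyD[OF homeomorphic_maps_sym[THEN iffD1, OF \<psi>] V_top U_top]
  have "homeomorphic_maps X Y (shellwise x y U \<phi>) (shellwise y x V \<psi>)"
    unfolding homeomorphic_maps_def
    using continuous_map_shellwise[OF U V \<open>t1_space X\<close> \<phi>(1,2)]
      continuous_map_shellwise[OF V U \<open>t1_space Y\<close> \<psi>'(1,2)]
      shellwise_inverse[OF U V \<open>t1_space X\<close> \<phi>(2,3)]
      shellwise_inverse[OF V U \<open>t1_space Y\<close> \<psi>'(2,3)]
    by blast
  then show ?thesis
    unfolding homeomorphic_map_maps by blast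
qed

lemma strict_clopen_nbhd_chain_exists:
  assumes fc: "first_countable X" and T1: "t1_space X" and d0: "X dim_le 0"
    and x: "x \<in> topspace X" "\<not> openin X {x}"
  obtains U where "clopen_nbhd_chain X x U" "\<And>n. shell U n \<noteq> {}"
proof -
  obtain \<B> where \<B>: "countable \<B>" "\<And>V. V \<in> \<B> \<Longrightarrow> openin X V"
    "\<And>W. openin X W \<Longrightarrow> x \<in> W \<Longrightarrow> \<exists>V\<in>\<B>. x \<in> V \<and> V \<subseteq> W"
    using fc x(1) unfolding first_countable_def by metis
  define b where "b = from_nat_into {V \<in> \<B>. x \<in> V}"
  have "{V \<in> \<B>. x \<in> V} \<noteq> {}" using \<B>(3)[of "topspace X"] x(1) by auto
  then have b: "b n \<in> \<B> \<and> x \<in> b n" for n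
    using from_nat_into[of "{V \<in> \<B>. x \<in> V}" n] unfolding b_def by simp
  have b_base: "\<exists>n. b n \<subseteq> W" if W: "openin X W" "x \<in> W" for W
  proof -
    obtain V where "V \<in> \<B>" "x \<in> V" "V \<subseteq> W" using \<B>(3)[OF W] by blast
    moreover have "countable {V \<in> \<B>. x \<in> V}" using \<B>(1) by simp
    ultimately show ?thesis
      unfolding b_def using from_nat_into_surj[of "{V \<in> \<B>. x \<in> V}" V] by auto
  qed
  \<comment> \<open>Losing a point in every step makes the shells nonempty.\<close>
  have step: "\<exists>T. clopenin X T \<and> x \<in> T \<and> T \<subseteq> S \<inter> b n \<and> S - T \<noteq> {}"
    if S: "openin X S" "x \<in> S" for S n
  proof -
    have "openin X (S \<inter> b n)" using S(1) \<B>(2) b by blast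
    moreover have "x \<in> S \<inter> b n" using S(2) b by blast
    moreover have "S \<inter> b n \<noteq> {x}" using \<open>openin X (S \<inter> b n)\<close> x(2) by metis
    ultimately obtain z where z: "z \<in> S \<inter> b n" "z \<noteq> x" by blast
    have "openin X (S \<inter> b n - {z})"
      using \<open>openin X (S \<inter> b n)\<close> closedin_t1_singleton[OF T1] z(1) S(1) openin_subset
      by (metis IntD1 openin_diff subsetD)
    then obtain T where "clopenin X T" "x \<in> T" "T \<subseteq> S \<inter> b n - {z}"
      using dimension_le_0_clopen_subnbhd[OF d0] \<open>x \<in> S \<inter> b n\<close> z(2) by blast
    then show ?thesis using z(1) by blast
  qed
  define F where "F S n = (SOME T. clopenin X T \<and> x \<in> T \<and> T \<subseteq> S \<inter> b n \<and> S - T \<noteq> {})" for S n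
  have F: "clopenin X (F S n) \<and> x \<in> F S n \<and> F S n \<subseteq> S \<inter> b n \<and> S - F S n \<noteq> {}"
    if "openin X S" "x \<in> S" for S n
    unfolding F_def using someI_ex[OF step[OF that]] .
  define U where "U = rec_nat (topspace X) (\<lambda>n S. F S n)"
  have U_0: "U 0 = topspace X" and U_Suc: "U (Suc n) = F (U n) n" for n
    by (simp_all add: U_def)
  have U: "clopenin X (U n) \<and> x \<in> U n" for n
    by (induction n) (use F U_0 U_Suc x(1) in auto)
  have U_step: "U (Suc n) \<subseteq> U n \<inter> b n \<and> U n - U (Suc n) \<noteq> {}" for n
    using F[of "U n" n] U[of n] U_Suc by simp
  show thesis
  proof (rule that)
    have "decseq U" using U_step by (simp add: decseq_Suc_iff)
    moreover have "\<exists>n. U n \<subseteq> W" if "openin X W" "x \<in> W" for W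
      using b_base[OF that] U_step by blast
    ultimately show "clopen_nbhd_chain X x U"
      unfolding clopen_nbhd_chain_def using U_0 U by blast
    show "shell U n \<noteq> {}" for n using U_step unfolding shell_def by blast
  qed
qed

lemma strongly_homogeneous_imp_homogeneous:
  assumes SH: "strongly_homogeneous X" and fc: "first_countable X" and d0: "X dim_le 0"
    and x: "x \<in> topspace X" and y: "y \<in> topspace X"
  obtains h where "homeomorphic_map X X h" "h x = y"
proof (cases "x = y")
  case True
  then show thesis using that[of id] by simp
next
  case False
  have T1: "t1_space X"
    using SH strongly_homogeneous_imp_Hausdorff_space Hausdorff_imp_t1_space by blast
  have no_isolated: "\<not> openin X {z}" if "z \<in> topspace X" for z
    using strongly_homogeneous_isolated_point[OF SH that] x y False by auto
  obtain U where U: "clopen_nbhd_chain X x U" "\<And>n. shell U n \<noteq> {}"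
    using strict_clopen_nbhd_chain_exists[OF fc T1 d0 x no_isolated[OF x]] by blast
  obtain V where V: "clopen_nbhd_chain X y V" "\<And>n. shell V n \<noteq> {}"
    using strict_clopen_nbhd_chain_exists[OF fc T1 d0 y no_isolated[OF y]] by blast
  have "\<forall>n. \<exists>\<phi>. homeomorphic_map (subtopology X (shell U n)) (subtopology X (shell V n)) \<phi>"
    using strongly_homogeneousD[OF SH clopen_shell[OF U(1)] U(2) clopen_shell[OF V(1)] V(2)]
    unfolding homeomorphic_space by blast
  then obtain \<phi> where "\<And>n. homeomorphic_map (subtopology X (shell U n)) (subtopology X (shell V n)) (\<phi> n)"
    by metis
  then have "homeomorphic_map X X (shellwise x y U \<phi>)"
    by (rule homeomorphic_map_shellwise[OF U(1) V(1) T1 T1])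
  moreover have "shellwise x y U \<phi> x = y" by (simp add: shellwise_def)
  ultimately show thesis by (rule that)
qed

lemma strongly_homogeneous_clopen_homeomorphism_point:
  assumes SH: "strongly_homogeneous X" and fc: "first_countable X" and d0: "X dim_le 0"
    and P: "clopenin X P" "a \<in> P" and Q: "clopenin X Q" "b \<in> Q"
  obtains f where "homeomorphic_map (subtopology X P) (subtopology X Q) f" "f a = b"
proof -
  obtain g where g: "homeomorphic_map (subtopology X P) (subtopology X Q) g"
    using strongly_homogeneousD[OF SH P(1) _ Q(1)] P(2) Q(2) unfolding homeomorphic_space by blast
  have P_top: "P \<subseteq> topspace X" and Q_top: "Q \<subseteq> topspace X"
    using P(1) Q(1) closedin_subset by blast+
  have "g a \<in> Q"
    using homeomorphic_imp_surjective_map[OF g] P(2) P_top Q_top by (auto simp: inf.absorb2)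
  moreover have "strongly_homogeneous (subtopology X Q)"
    by (rule strongly_homogeneous_subtopology[OF SH Q(1)])
  ultimately obtain k where k: "homeomorphic_map (subtopology X Q) (subtopology X Q) k" "k (g a) = b"
    using strongly_homogeneous_imp_homogeneous[of "subtopology X Q" "g a" b]
      first_countable_subtopology[OF fc] dimension_le_subtopology[OF d0] Q(2) Q_top
    by (auto simp: inf.absorb2)
  show thesis
    using that[of "k \<circ> g"] homeomorphic_map_compose[OF g k(1)] k(2) by simp
qed

section \<open>Extending bijections between discrete sets\<close>

lemma disjoint_family_on_reindex:
  assumes "disjoint_family_on Q (g ` I)" "inj_on g I"
  shows "disjoint_family_on (\<lambda>i. Q (g i)) I"
  unfolding disjoint_family_on_def
proof (intro ballI impI)
  fix i j assume ij: "i \<in> I" "j \<in> I" "i \<noteq> j"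
  then have "g i \<noteq> g j" using inj_on_eq_iff[OF assms(2) ij(1,2)] by simp
  moreover have "g i \<in> g ` I" "g j \<in> g ` I" using ij by simp_all
  ultimately show "Q (g i) \<inter> Q (g j) = {}"
    using disjoint_family_onD[OF assms(1)] by blast
qed

lemma strongly_homogeneous_homeomorphism_of_clopen_partitions:
  assumes SH: "strongly_homogeneous X" and fc: "first_countable X" and d0: "X dim_le 0"
    and P: "\<And>i. i \<in> I \<Longrightarrow> clopenin X (P i)" "disjoint_family_on P I" "topspace X \<subseteq> (\<Union>i\<in>I. P i)"
    and Q: "\<And>i. i \<in> I \<Longrightarrow> clopenin X (Q i)" "disjoint_family_on Q I" "topspace X \<subseteq> (\<Union>i\<in>I. Q i)"
    and p: "\<And>i. i \<in> I \<Longrightarrow> p i \<in> P i" and q: "\<And>i. i \<in> I \<Longrightarrow> q i \<in> Q i"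
  obtains h where "homeomorphic_map X X h" "\<And>i. i \<in> I \<Longrightarrow> h (p i) = q i"
proof -
  define \<phi> where
    "\<phi> i = (SOME \<phi>. homeomorphic_map (subtopology X (P i)) (subtopology X (Q i)) \<phi> \<and> \<phi> (p i) = q i)"
    for i
  have \<phi>: "homeomorphic_map (subtopology X (P i)) (subtopology X (Q i)) (\<phi> i)" "\<phi> i (p i) = q i"
    if i: "i \<in> I" for i
  proof -
    obtain \<psi> where "homeomorphic_map (subtopology X (P i)) (subtopology X (Q i)) \<psi>" "\<psi> (p i) = q i"
      by (rule strongly_homogeneous_clopen_homeomorphism_point[OF SH fc d0 P(1)[OF i] p[OF i]
            Q(1)[OF i] q[OF i]])
    then have "\<exists>\<psi>. homeomorphic_map (subtopology X (P i)) (subtopology X (Q i)) \<psi> \<and> \<psi> (p i) = q i"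
      by blast
    then show "homeomorphic_map (subtopology X (P i)) (subtopology X (Q i)) (\<phi> i)" "\<phi> i (p i) = q i"
      unfolding \<phi>_def by (metis (mono_tags, lifting) someI_ex)+
  qed
  have P_open: "openin X (P i)" and Q_open: "openin X (Q i)" if "i \<in> I" for i
    using P(1)[OF that] Q(1)[OF that] by blast+
  obtain h where h: "homeomorphic_map X X h" "\<And>i z. i \<in> I \<Longrightarrow> z \<in> P i \<Longrightarrow> h z = \<phi> i z"
    using homeomorphic_map_paste[OF P_open P(2,3) Q_open Q(2,3) \<phi>(1)] by metis
  show thesis
  proof (rule that[OF h(1)])
    fix i assume "i \<in> I"
    then show "h (p i) = q i" using h(2) p \<phi>(2) by simp
  qed
qed

lemma strongly_homogeneous_extend_discrete_bijection:
  assumes SH: "strongly_homogeneous X" and L: "Lindelof_space X" and fc: "first_countable X"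
    and d0: "X dim_le 0" and no_isolated: "\<And>z. z \<in> topspace X \<Longrightarrow> \<not> openin X {z}"
    and A: "discrete_subset X A" "A \<noteq> {}" and B: "discrete_subset X B" and f: "bij_betw f A B"
  obtains h where "homeomorphic_map X X h" "\<And>a. a \<in> A \<Longrightarrow> h a = f a"
proof -
  have T1: "t1_space X"
    using SH strongly_homogeneous_imp_Hausdorff_space Hausdorff_imp_t1_space by blast
  have f_AB: "f ` A = B" and f_inj: "inj_on f A"
    using f by (auto simp: bij_betw_def)
  then have "B \<noteq> {}" using A(2) by blast
  define I where "I = insert None (Some ` A)"
  obtain P where P: "\<And>i. i \<in> I \<Longrightarrow> clopenin X (P i)" "disjoint_family_on P I"
    "topspace X \<subseteq> (\<Union>i\<in>I. P i)" "\<And>a. a \<in> A \<Longrightarrow> a \<in> P (Some a)" "P None \<noteq> {}"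
    using discrete_subset_clopen_partition[OF L d0 T1 no_isolated A] unfolding I_def by blast
  obtain Q where Q: "\<And>j. j \<in> insert None (Some ` B) \<Longrightarrow> clopenin X (Q j)"
    "disjoint_family_on Q (insert None (Some ` B))" "topspace X \<subseteq> (\<Union>j \<in> insert None (Some ` B). Q j)"
    "\<And>b. b \<in> B \<Longrightarrow> b \<in> Q (Some b)" "Q None \<noteq> {}"
    using discrete_subset_clopen_partition[OF L d0 T1 no_isolated B \<open>B \<noteq> {}\<close>] by blast
  have I_image: "map_option f ` I = insert None (Some ` B)"
    unfolding I_def f_AB[symmetric] by (simp add: image_image)
  have "inj_on (map_option f) I"
    using f_inj unfolding I_def inj_on_def by (auto split: option.splits)
  then have E_disjoint: "disjoint_family_on (\<lambda>i. Q (map_option f i)) I"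
    using disjoint_family_on_reindex Q(2) I_image by metis
  have "(\<Union>i\<in>I. Q (map_option f i)) = (\<Union>j \<in> map_option f ` I. Q j)" by simp
  then have E_cover: "topspace X \<subseteq> (\<Union>i\<in>I. Q (map_option f i))" using Q(3) I_image by simp
  have E_clopen: "clopenin X (Q (map_option f i))" if "i \<in> I" for i
  proof -
    have "map_option f i \<in> insert None (Some ` B)" using I_image that by blast
    then show ?thesis by (rule Q(1))
  qed
  obtain p0 q0 where "p0 \<in> P None" "q0 \<in> Q None" using P(5) Q(5) by blast
  define p where "p i = (case i of None \<Rightarrow> p0 | Some a \<Rightarrow> a)" for i
  define q where "q i = (case i of None \<Rightarrow> q0 | Some a \<Rightarrow> f a)" for i
  have "p i \<in> P i" "q i \<in> Q (map_option f i)" if "i \<in> I" for i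
    using that \<open>p0 \<in> P None\<close> \<open>q0 \<in> Q None\<close> P(4) Q(4) f_AB
    unfolding I_def p_def q_def by auto
  then obtain h where h: "homeomorphic_map X X h" "\<And>i. i \<in> I \<Longrightarrow> h (p i) = q i"
    using strongly_homogeneous_homeomorphism_of_clopen_partitions[OF SH fc d0 P(1-3) E_clopen
        E_disjoint E_cover] by metis
  show thesis
  proof (rule that[OF h(1)])
    fix a assume "a \<in> A"
    then show "h a = f a" using h(2)[of "Some a"] unfolding I_def p_def q_def by simp
  qed
qed

theorem mainTheorem3:
  fixes X :: "'a topology"
  assumes "strongly_homogeneous X"
    and "separable_space X"
    and "metrizable_space X"
    and "X dim_le 0"
  shows "strongly_discrete_homogeneous X"
proof -
  have L: "Lindelof_space X" using assms(2,3) by (rule separable_metrizable_imp_Lindelof_space)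
  have fc: "first_countable X" using assms(3) by (rule metrizable_imp_first_countable)
  have "\<exists>h. homeomorphic_map X X h \<and> (\<forall>a\<in>A. h a = f a)"
    if A: "discrete_subset X A" and B: "discrete_subset X B" and f: "bij_betw f A B" for A B f
  proof (cases "A \<noteq> {} \<and> (\<forall>z\<in>topspace X. \<not> openin X {z})")
    case True
    then obtain h where "homeomorphic_map X X h" "\<And>a. a \<in> A \<Longrightarrow> h a = f a"
      using strongly_homogeneous_extend_discrete_bijection[OF assms(1) L fc assms(4) _ A _ B f]
      by blast
    then show ?thesis by blast
  next
    case False
    have "f a = a" if a: "a \<in> A" for a
    proof -
      obtain z where "z \<in> topspace X" "openin X {z}" using False a by blast
      then have "topspace X = {z}" by (rule strongly_homogeneous_isolated_point[OF assms(1)])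
      moreover have "a \<in> topspace X" "f a \<in> topspace X"
        using A B f a unfolding discrete_subset_def bij_betw_def by auto
      ultimately show ?thesis by simp
    qed
    then show ?thesis by (intro exI[of _ id]) simp
  qed
  then show ?thesis
    unfolding strongly_discrete_homogeneous_def
    using assms(1) strongly_homogeneous_imp_Hausdorff_space by blast
qed

end
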